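(* Let $c,\rho\in(0,1)$ with $c+\rho>1$. Suppose the conditional gradient algorithm chooses $\theta_k\in[0,1]$ with $\rho\hat\theta_k\le\theta_k\le\hat\theta_k$, where $\hat\theta_k=\max\{\theta\in[0,1]:(1-\theta)\mathrm{gap}(x_k,g_k)+\mathcal D(x_k,s_k,\theta)\le(1-c\theta)\mathrm{gap}(x_k,g_k)\}$. Suppose $q>1$, $r\in[0,1]$ are such that $(\mathcal D,\mathrm{gap},\mathrm{subopt})$ satisfies the $(q,r)$ weak growth property with some finite $M>0$. Then for $k=0,1,\dots$ \[ \mathrm{subopt}_{k+1}\le\mathrm{subopt}_k\Big(1-(c+\rho-1)\min\Big\{1,\Big(\tfrac{q(1-c)}{M}\mathrm{subopt}_k^{1-r}\Big)^{\frac1{q-1}}\Big\}\Big). \] If $r=1$ then $\mathrm{subopt}_k\le\mathrm{subopt}_0\big(1-(c+\rho-1)\min\{1,(q(1-c)/M)^{1/(q-1)}\}\big)^k$. If $r\in[0,1)$ then $\mathrm{subopt}_k\le\mathrm{subopt}_0(1-(c+\rho-1))^k$ for $k=0,\dots,k_0$, where $k_0$ is the smallest $k$ with $\mathrm{subopt}_k^{1-r}\le\frac{M}{q(1-c)}$, and for $k\ge k_0$ \[ \mathrm{subopt}_k\le\Big(\mathrm{subopt}_{k_0}^{\frac{r-1}{q-1}}+\frac{(1-r)(c+\rho-1)}{q-1}\Big(\frac{q(1-c)}{M}\Big)^{\frac1{q-1}}(k-k_0)\Big)^{\frac{q-1}{r-1}}. \]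
   Context: Let $f,\Psi:\mathbb{R}^n\to\mathbb{R}\cup\{\infty\}$ be closed proper convex functions such that (A1) $f$ is differentiable on $\mathrm{dom}(\Psi)$, and (A2) for every $x\in\mathrm{dom}(f)$ the set $\arg\min_s\{\langle\nabla f(x),s\rangle+\Psi(s)\}$ is nonempty. $f^*,\Psi^*$ denote convex conjugates; $\arg\min_y\{\langle g,y\rangle+\Psi(y)\}=\partial\Psi^*(-g)$. $D_f(y,x)=f(y)-f(x)-\langle\nabla f(x),y-x\rangle$. $\mathrm{gap}(x,u)=f(x)+\Psi(x)+f^*(u)+\Psi^*(-u)$. $\mathcal{D}(x,s,\theta)=D_f(x+\theta(s-x),x)+\Psi(x+\theta(s-x))-(1-\theta)\Psi(x)-\theta\Psi(s)$. Suboptimality gap: $\mathrm{subopt}(x)=f(x)+\Psi(x)-\min_y\{f(y)+\Psi(y)\}$ for $x\in\mathrm{dom}(\Psi)$ (the minimum assumed attained/finite). Conditional gradient algorithm: given $x_0\in\mathrm{dom}(\Psi)$, for $k=0,1,2,\dots$ let $g_k=\nabla f(x_k)$, pick $s_k\in\arg\min_y\{\langle g_k,y\rangle+\Psi(y)\}$ and $\theta_k\in[0,1]$, and set $x_{k+1}=(1-\theta_k)x_k+\theta_k s_k$. $\mathrm{subopt}_k=\mathrm{subopt}(x_k)$. $(q,r)$ weak growth property ($q>1$, $r\in[0,1]$): there is a finite $M>0$ such that for all $x\in\mathrm{dom}(\Psi)$, $g=\nabla f(x)$, $s\in\partial\Psi^*(-g)$: $\mathcal D(x,s,\theta)\,\mathrm{subopt}(x)^{1-r}\le\frac{M\theta^q}{q}\mathrm{gap}(x,g)$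 for all $\theta\in[0,1]$. *)

theory Defs
  imports "HOL-Analysis.Analysis"
begin

definition edom :: "('a \<Rightarrow> ereal) \<Rightarrow> 'a set" where
  "edom h = {x. h x < \<infinity>}"

definition proper_fun :: "('a \<Rightarrow> ereal) \<Rightarrow> bool" where
  "proper_fun h \<longleftrightarrow> (\<forall>x. h x \<noteq> -\<infinity>) \<and> (\<exists>x. h x < \<infinity>)"

definition eepi :: "('a \<Rightarrow> ereal) \<Rightarrow> ('a \<times> real) set" where
  "eepi h = {(x, t). h x \<le> ereal t}"

definition closed_proper_convex :: "('a::euclidean_space \<Rightarrow> ereal) \<Rightarrow> bool" where
  "closed_proper_convex h \<longleftrightarrow> proper_fun h \<and> convex (eepi h) \<and> closed (eepi h)"

definition conj_fun :: "('a::euclidean_space \<Rightarrow> ereal) \<Rightarrow> 'a \<Rightarrow> ereal" where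
  "conj_fun h u = (SUP x. ereal (u \<bullet> x) - h x)"

definition subdiff :: "('a::euclidean_space \<Rightarrow> ereal) \<Rightarrow> 'a \<Rightarrow> 'a set" where
  "subdiff h u = {s. \<bar>h u\<bar> \<noteq> \<infinity> \<and> (\<forall>v. h u + ereal (s \<bullet> (v - u)) \<le> h v)}"

definition has_grad :: "('a::euclidean_space \<Rightarrow> ereal) \<Rightarrow> 'a \<Rightarrow> 'a \<Rightarrow> bool" where
  "has_grad f g x \<longleftrightarrow> eventually (\<lambda>y. \<bar>f y\<bar> \<noteq> \<infinity>) (nhds x) \<and>
     ((\<lambda>y. real_of_ereal (f y)) has_derivative (\<lambda>h. g \<bullet> h)) (at x)"

definition is_lin_argmin :: "('a::euclidean_space \<Rightarrow> ereal) \<Rightarrow> 'a \<Rightarrow> 'a \<Rightarrow> bool" where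
  "is_lin_argmin \<Psi> g s \<longleftrightarrow> (\<forall>y. ereal (g \<bullet> s) + \<Psi> s \<le> ereal (g \<bullet> y) + \<Psi> y)"

definition bregman :: "('a::euclidean_space \<Rightarrow> ereal) \<Rightarrow> ('a \<Rightarrow> 'a) \<Rightarrow> 'a \<Rightarrow> 'a \<Rightarrow> ereal" where
  "bregman f gf y x = f y - f x - ereal (gf x \<bullet> (y - x))"

definition gap :: "('a::euclidean_space \<Rightarrow> ereal) \<Rightarrow> ('a \<Rightarrow> ereal) \<Rightarrow> 'a \<Rightarrow> 'a \<Rightarrow> ereal" where
  "gap f \<Psi> x u = f x + \<Psi> x + conj_fun f u + conj_fun \<Psi> (- u)"

definition Dcal :: "('a::euclidean_space \<Rightarrow> ereal) \<Rightarrow> ('a \<Rightarrow> ereal) \<Rightarrow> ('a \<Rightarrow> 'a)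
    \<Rightarrow> 'a \<Rightarrow> 'a \<Rightarrow> real \<Rightarrow> ereal" where
  "Dcal f \<Psi> gf x s \<theta> =
     bregman f gf (x + \<theta> *\<^sub>R (s - x)) x + \<Psi> (x + \<theta> *\<^sub>R (s - x))
       - ereal (1 - \<theta>) * \<Psi> x - ereal \<theta> * \<Psi> s"

text \<open>suboptimality gap (meaningful for x in dom Psi, when the minimum is attained/finite)\<close>
definition subopt :: "('a \<Rightarrow> ereal) \<Rightarrow> ('a \<Rightarrow> ereal) \<Rightarrow> 'a \<Rightarrow> real" where
  "subopt f \<Psi> x = real_of_ereal (f x + \<Psi> x - (INF y. f y + \<Psi> y))"

text \<open>real power a^e with the convention a^0 = 1 (also for a = 0)\<close>
definition rpow :: "real \<Rightarrow> real \<Rightarrow> real" where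
  "rpow a e = (if e = 0 then 1 else a powr e)"

definition weak_growth :: "('a::euclidean_space \<Rightarrow> ereal) \<Rightarrow> ('a \<Rightarrow> ereal) \<Rightarrow> ('a \<Rightarrow> 'a)
    \<Rightarrow> real \<Rightarrow> real \<Rightarrow> real \<Rightarrow> bool" where
  "weak_growth f \<Psi> gf q r M \<longleftrightarrow> M > 0 \<and>
     (\<forall>x \<in> edom \<Psi>. \<forall>s \<in> subdiff (conj_fun \<Psi>) (- gf x). \<forall>\<theta> \<in> {0..1}.
        Dcal f \<Psi> gf x s \<theta> * ereal (rpow (subopt f \<Psi> x) (1 - r))
          \<le> ereal (M * \<theta> powr q / q) * gap f \<Psi> x (gf x))"

definition theta_hat :: "('a::euclidean_space \<Rightarrow> ereal) \<Rightarrow> ('a \<Rightarrow> ereal) \<Rightarrow> ('a \<Rightarrow> 'a)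
    \<Rightarrow> real \<Rightarrow> 'a \<Rightarrow> 'a \<Rightarrow> real" where
  "theta_hat f \<Psi> gf c x s = (GREATEST \<theta>. \<theta> \<in> {0..1} \<and>
      ereal (1 - \<theta>) * gap f \<Psi> x (gf x) + Dcal f \<Psi> gf x s \<theta>
        \<le> ereal (1 - c * \<theta>) * gap f \<Psi> x (gf x))"

end

theory Submission
  imports Defs
begin

(*
  Along the segment z(t) = x + t (s - x) write F = f + Psi and G = <grad f x, x - s> + Psi x - Psi s
  for the Frank-Wolfe gap, which dominates the suboptimality by the gradient inequality. The step
  sizes passing the test defining theta_hat are those t in [0, 1] with F (z t) <= F x - c t G; they
  form a closed interval [0, theta_hat], closed because f is continuous and Psi has a closed
  epigraph, an interval by convexity. Weak growth shows that m = min 1 ((q (1 - c) / M subopt^(1-r))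
  powr (1 / (q - 1))) passes the test, so theta_hat >= m, and a step theta >= rho theta_hat decreases
  the suboptimality by the factor 1 - c rho m <= 1 - (c + rho - 1) m. The rates follow from this
  recursion: geometric for r = 1, and for r < 1 geometric until subopt^(1-r) drops below
  M / (q (1 - c)), after which subopt^(-(1-r)/(q-1)) grows at least linearly by Bernoulli's
  inequality.
*)

lemma one_add_mult_le_powr_neg:
  fixes u p :: real
  assumes "0 \<le> u" "u < 1" "0 < p"
  shows "1 + p * u \<le> (1 - u) powr (- p)"
proof -
  have "p * u \<le> - p * ln (1 - u)"
    using ln_le_minus_one[of "1 - u"] mult_left_mono[of "ln (1 - u)" "- u" p] assms by simp
  hence "1 + p * u \<le> exp (- p * ln (1 - u))"
    by (meson exp_ge_add_one_self exp_le_cancel_iff order_trans add_left_mono)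
  thus ?thesis using assms by (simp add: powr_def)
qed

lemma powr_neg_growth_under_contraction:
  fixes a b u p :: real
  assumes b: "0 < b" "b \<le> a * (1 - u)" and "0 \<le> a" "0 \<le> u" "0 < p"
  shows "a powr (- p) * (1 + p * u) \<le> b powr (- p)"
proof -
  have "0 < a * (1 - u)" using b by linarith
  hence a: "0 < a" and u: "u < 1" using \<open>0 \<le> a\<close> by (auto simp: zero_less_mult_iff)
  have "a powr (- p) * (1 + p * u) \<le> a powr (- p) * (1 - u) powr (- p)"
    using one_add_mult_le_powr_neg[OF \<open>0 \<le> u\<close> u \<open>0 < p\<close>] by (intro mult_left_mono) auto
  also have "\<dots> = (a * (1 - u)) powr (- p)" using a u by (simp add: powr_mult)
  also have "\<dots> \<le> b powr (- p)" using b \<open>0 < p\<close> by (intro powr_mono2') auto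
  finally show ?thesis .
qed

lemma geometric_decay_upto:
  fixes a :: "nat \<Rightarrow> real"
  assumes step: "\<And>k. k < n \<Longrightarrow> a (Suc k) \<le> a k * \<beta>" and "0 \<le> \<beta>" and "k \<le> n"
  shows "a k \<le> a 0 * \<beta> ^ k"
  using \<open>k \<le> n\<close>
proof (induction k)
  case (Suc k)
  have "a (Suc k) \<le> a k * \<beta>" using step Suc.prems by simp
  also have "\<dots> \<le> a 0 * \<beta> ^ k * \<beta>" using Suc \<open>0 \<le> \<beta>\<close> by (intro mult_right_mono) auto
  finally show ?case by (simp add: mult_ac)
qed simp

lemma geometric_decay_reaches_threshold:
  fixes a :: "nat \<Rightarrow> real"
  assumes "\<And>k. 0 \<le> a k" and step: "\<And>k. \<not> P k \<Longrightarrow> a (Suc k) \<le> a k * \<beta>"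
    and "0 \<le> \<beta>" "\<beta> < 1" and "0 < L" and below: "\<And>k. a k \<le> L \<Longrightarrow> P k"
  shows "\<exists>k. P k"
proof (rule ccontr)
  assume never: "\<nexists>k. P k"
  have geo: "a k \<le> a 0 * \<beta> ^ k" for k
    by (rule geometric_decay_upto[of k]) (use step never assms(3) in auto)
  have "0 < a 0 + 1" using assms(1)[of 0] by simp
  then obtain n where n: "\<beta> ^ n < L / (a 0 + 1)"
    using real_arch_pow_inv[of "L / (a 0 + 1)" \<beta>] assms by auto
  have "a n \<le> a 0 * \<beta> ^ n" by (rule geo)
  also have "\<dots> \<le> (a 0 + 1) * \<beta> ^ n" using \<open>0 \<le> \<beta>\<close> by (intro mult_right_mono) auto
  also have "\<dots> < L" using n \<open>0 < a 0 + 1\<close> by (simp add: pos_less_divide_eq mult.commute)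
  finally show False using below never less_imp_le by blast
qed

text \<open>By Bernoulli's inequality \<open>a k powr (- p)\<close> grows by at least \<open>p * \<beta>\<close> per step.\<close>
lemma sublinear_decay_from:
  fixes a :: "nat \<Rightarrow> real"
  assumes nonneg: "\<And>k. 0 \<le> a k" and "0 < p" "0 \<le> \<beta>"
    and contraction: "\<And>k. k0 \<le> k \<Longrightarrow> a (Suc k) \<le> a k * (1 - \<beta> * a k powr p)"
    and "k0 \<le> k"
  shows "a k \<le> (a k0 powr (- p) + p * \<beta> * real (k - k0)) powr (- 1 / p)"
proof -
  define B where "B k = a k0 powr (- p) + p * \<beta> * real (k - k0)" for k
  have inv: "a k = 0 \<or> (0 < B k \<and> B k \<le> a k powr (- p))" if "k0 \<le> k" for k
    using that
  proof (induction k rule: dec_induct)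
    case base
    then show ?case using nonneg[of k0] unfolding B_def by auto
  next
    case (step n)
    show ?case
    proof (cases "a (Suc n) = 0")
      case False
      hence pos: "0 < a (Suc n)" using nonneg[of "Suc n"] by simp
      have "a n \<noteq> 0" using pos step.hyps(1) contraction[of n] by auto
      hence IH: "0 < B n" "B n \<le> a n powr (- p)" using step.IH by auto
      have "a n powr (- p) * (1 + p * (\<beta> * a n powr p)) \<le> a (Suc n) powr (- p)"
        using contraction[OF step.hyps(1)] pos nonneg[of n] \<open>0 < p\<close> \<open>0 \<le> \<beta>\<close>
        by (intro powr_neg_growth_under_contraction) auto
      moreover have "a n powr (- p) * (1 + p * (\<beta> * a n powr p)) = a n powr (- p) + p * \<beta>"
        using \<open>a n \<noteq> 0\<close> nonneg[of n] by (simp add: algebra_simps powr_add[symmetric])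
      moreover have "B (Suc n) = B n + p * \<beta>"
        unfolding B_def using step.hyps(1) by (simp add: Suc_diff_le algebra_simps)
      moreover have "0 \<le> p * \<beta>" using \<open>0 < p\<close> \<open>0 \<le> \<beta>\<close> by simp
      ultimately show ?thesis using IH by simp
    qed simp
  qed
  show ?thesis
  proof (cases "a k = 0")
    case False
    hence pos: "0 < a k" and B: "0 < B k" "B k \<le> a k powr (- p)"
      using inv[OF \<open>k0 \<le> k\<close>] nonneg[of k] by auto
    have "a k = (a k powr (- p)) powr (- 1 / p)" using pos \<open>0 < p\<close> by (simp add: powr_powr)
    also have "\<dots> \<le> B k powr (- 1 / p)" using B \<open>0 < p\<close> by (intro powr_mono2') auto
    finally show ?thesis unfolding B_def .
  qed simp
qed

lemma recursion_rate_sublinear: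
  fixes a :: "nat \<Rightarrow> real" and \<kappa> K q r :: real
  assumes nonneg: "\<And>k. 0 \<le> a k" and \<kappa>: "0 < \<kappa>" "\<kappa> < 1" and K: "0 < K"
    and r: "0 \<le> r" "r < 1" and q: "1 < q"
    and step: "\<And>k. a (Suc k) \<le> a k * (1 - \<kappa> * min 1 ((K * a k powr (1 - r)) powr (1 / (q - 1))))"
  shows "(\<exists>k. a k powr (1 - r) \<le> 1 / K) \<and>
    (let k0 = (LEAST k. a k powr (1 - r) \<le> 1 / K) in
      (\<forall>k \<le> k0. a k \<le> a 0 * (1 - \<kappa>) ^ k) \<and>
      (\<forall>k \<ge> k0. a k \<le> (a k0 powr ((r - 1) / (q - 1))
          + (1 - r) * \<kappa> / (q - 1) * K powr (1 / (q - 1)) * real (k - k0)) powr ((q - 1) / (r - 1))))"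
proof -
  let ?P = "\<lambda>k. a k powr (1 - r) \<le> 1 / K"
  have decr: "a (Suc k) \<le> a k" for k
  proof -
    have "0 \<le> \<kappa> * min 1 ((K * a k powr (1 - r)) powr (1 / (q - 1)))" using \<kappa> by simp
    hence "a k * (1 - \<kappa> * min 1 ((K * a k powr (1 - r)) powr (1 / (q - 1)))) \<le> a k"
      using nonneg[of k] by (intro mult_left_le) auto
    with step[of k] show ?thesis by (rule order_trans)
  qed
  have linear: "a (Suc k) \<le> a k * (1 - \<kappa>)" if "\<not> ?P k" for k
  proof -
    have "1 \<le> (K * a k powr (1 - r)) powr (1 / (q - 1))"
      using that K q by (intro ge_one_powr_ge_zero) (auto simp: field_simps)
    thus ?thesis using step[of k] by simp
  qed
  have reached: "\<exists>k. ?P k"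
  proof (rule geometric_decay_reaches_threshold[where a = a and P = ?P and \<beta> = "1 - \<kappa>", OF nonneg linear])
    show "?P k" if "a k \<le> (1 / K) powr (1 / (1 - r))" for k
    proof -
      have "a k powr (1 - r) \<le> ((1 / K) powr (1 / (1 - r))) powr (1 - r)"
        using that nonneg[of k] r by (intro powr_mono2) auto
      thus ?thesis using K r by (simp add: powr_powr)
    qed
  qed (use \<kappa> K in auto)
  define k0 where "k0 = (LEAST k. ?P k)"
  have before: "a k \<le> a 0 * (1 - \<kappa>) ^ k" if "k \<le> k0" for k
  proof (rule geometric_decay_upto[OF _ _ that])
    show "a (Suc j) \<le> a j * (1 - \<kappa>)" if "j < k0" for j
      using linear not_less_Least[OF that[unfolded k0_def]] by blast
  qed (use \<kappa> in simp)
  define p where "p = (1 - r) / (q - 1)"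
  define \<beta> where "\<beta> = \<kappa> * K powr (1 / (q - 1))"
  have after_step: "a (Suc k) \<le> a k * (1 - \<beta> * a k powr p)" if "k0 \<le> k" for k
  proof -
    have "a k \<le> a k0" using decseqD[OF decseq_SucI[of a, OF decr] that] .
    hence "a k powr (1 - r) \<le> a k0 powr (1 - r)" using nonneg r by (intro powr_mono2) auto
    also have "\<dots> \<le> 1 / K" unfolding k0_def using reached by (rule LeastI_ex)
    finally have "(K * a k powr (1 - r)) powr (1 / (q - 1)) \<le> 1"
      using K q by (intro powr_le1) (auto simp: field_simps)
    moreover have "(K * a k powr (1 - r)) powr (1 / (q - 1)) = K powr (1 / (q - 1)) * a k powr p"
      using K nonneg[of k] unfolding p_def by (simp add: powr_mult powr_powr)
    ultimately show ?thesis using step[of k] unfolding \<beta>_def by (simp add: mult.assoc)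
  qed
  have after: "a k \<le> (a k0 powr ((r - 1) / (q - 1))
          + (1 - r) * \<kappa> / (q - 1) * K powr (1 / (q - 1)) * real (k - k0)) powr ((q - 1) / (r - 1))"
    if "k0 \<le> k" for k
  proof -
    have "a k \<le> (a k0 powr (- p) + p * \<beta> * real (k - k0)) powr (- 1 / p)"
      by (rule sublinear_decay_from[where a = a, OF nonneg _ _ after_step that])
        (use r q \<kappa> K in \<open>auto simp: p_def \<beta>_def\<close>)
    moreover have "- p = (r - 1) / (q - 1)" "- 1 / p = (q - 1) / (r - 1)"
      "p * \<beta> = (1 - r) * \<kappa> / (q - 1) * K powr (1 / (q - 1))"
      using r q unfolding p_def \<beta>_def by (auto simp: field_simps)
    ultimately show ?thesis by simp
  qed
  show ?thesis using reached before after unfolding k0_def[symmetric] Let_def by blast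
qed

lemma closed_proper_convex_not_MInfty: "closed_proper_convex h \<Longrightarrow> h y \<noteq> -\<infinity>"
  by (simp add: closed_proper_convex_def proper_fun_def)

lemma closed_proper_convex_combination:
  assumes h: "closed_proper_convex h" and u: "\<bar>h u\<bar> \<noteq> \<infinity>" and v: "\<bar>h v\<bar> \<noteq> \<infinity>"
    and t: "0 \<le> t" "t \<le> 1"
  shows "\<bar>h ((1 - t) *\<^sub>R u + t *\<^sub>R v)\<bar> \<noteq> \<infinity>"
    and "real_of_ereal (h ((1 - t) *\<^sub>R u + t *\<^sub>R v))
           \<le> (1 - t) * real_of_ereal (h u) + t * real_of_ereal (h v)"
proof -
  have "(u, real_of_ereal (h u)) \<in> eepi h" "(v, real_of_ereal (h v)) \<in> eepi h"
    using u v unfolding eepi_def by (simp_all add: ereal_real')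
  moreover have "convex (eepi h)" using h by (simp add: closed_proper_convex_def)
  ultimately have "(1 - t) *\<^sub>R (u, real_of_ereal (h u)) + t *\<^sub>R (v, real_of_ereal (h v)) \<in> eepi h"
    using t by (intro convexD) auto
  hence le: "h ((1 - t) *\<^sub>R u + t *\<^sub>R v) \<le> ereal ((1 - t) * real_of_ereal (h u) + t * real_of_ereal (h v))"
    by (simp add: eepi_def)
  moreover have "h ((1 - t) *\<^sub>R u + t *\<^sub>R v) \<noteq> -\<infinity>" using closed_proper_convex_not_MInfty[OF h] .
  ultimately obtain w where "h ((1 - t) *\<^sub>R u + t *\<^sub>R v) = ereal w"
    by (cases "h ((1 - t) *\<^sub>R u + t *\<^sub>R v)") auto
  with le show "\<bar>h ((1 - t) *\<^sub>R u + t *\<^sub>R v)\<bar> \<noteq> \<infinity>"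
    and "real_of_ereal (h ((1 - t) *\<^sub>R u + t *\<^sub>R v))
           \<le> (1 - t) * real_of_ereal (h u) + t * real_of_ereal (h v)"
    by simp_all
qed

locale cond_grad_problem =
  fixes f \<Psi> :: "'a::euclidean_space \<Rightarrow> ereal" and gf :: "'a \<Rightarrow> 'a"
  assumes f_cpc: "closed_proper_convex f" and \<Psi>_cpc: "closed_proper_convex \<Psi>"
    and has_grad_on_edom: "\<forall>y \<in> edom \<Psi>. has_grad f (gf y) y"
begin

definition obj :: "'a \<Rightarrow> real" where
  "obj y = real_of_ereal (f y) + real_of_ereal (\<Psi> y)"

definition fw_gap :: "'a \<Rightarrow> 'a \<Rightarrow> real" where
  "fw_gap x s = real_of_ereal (\<Psi> x) - real_of_ereal (\<Psi> s) + gf x \<bullet> (x - s)"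

definition descent_steps :: "real \<Rightarrow> 'a \<Rightarrow> 'a \<Rightarrow> real set" where
  "descent_steps c x s = {t \<in> {0..1}. obj (x + t *\<^sub>R (s - x)) \<le> obj x - c * t * fw_gap x s}"

lemma \<Psi>_finite: "y \<in> edom \<Psi> \<Longrightarrow> \<bar>\<Psi> y\<bar> \<noteq> \<infinity>"
  using closed_proper_convex_not_MInfty[OF \<Psi>_cpc, of y] by (cases "\<Psi> y") (auto simp: edom_def)

lemma f_finite:
  assumes "y \<in> edom \<Psi>"
  shows "\<bar>f y\<bar> \<noteq> \<infinity>"
proof -
  have "eventually (\<lambda>z. \<bar>f z\<bar> \<noteq> \<infinity>) (nhds y)"
    using has_grad_on_edom assms unfolding has_grad_def by auto
  thus ?thesis by (rule eventually_nhds_x_imp_x)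
qed

lemma f_has_derivative:
  "y \<in> edom \<Psi> \<Longrightarrow> ((\<lambda>z. real_of_ereal (f z)) has_derivative (\<lambda>h. gf y \<bullet> h)) (at y)"
  using has_grad_on_edom unfolding has_grad_def by auto

lemma edom_\<Psi>_convex_combination:
  assumes "u \<in> edom \<Psi>" "v \<in> edom \<Psi>" "0 \<le> t" "t \<le> 1"
  shows "(1 - t) *\<^sub>R u + t *\<^sub>R v \<in> edom \<Psi>"
  using closed_proper_convex_combination(1)[OF \<Psi>_cpc \<Psi>_finite \<Psi>_finite, of u v t] assms
  by (auto simp: edom_def)

lemma edom_\<Psi>_values:
  assumes "y \<in> edom \<Psi>"
  obtains a b where "f y = ereal a" "\<Psi> y = ereal b"
  using f_finite[OF assms] \<Psi>_finite[OF assms] by (cases "f y"; cases "\<Psi> y") auto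

lemma obj_convex:
  assumes "u \<in> edom \<Psi>" "v \<in> edom \<Psi>" "0 \<le> t" "t \<le> 1"
  shows "obj ((1 - t) *\<^sub>R u + t *\<^sub>R v) \<le> (1 - t) * obj u + t * obj v"
  using closed_proper_convex_combination(2)[OF f_cpc f_finite f_finite, of u v t]
    closed_proper_convex_combination(2)[OF \<Psi>_cpc \<Psi>_finite \<Psi>_finite, of u v t] assms
  unfolding obj_def by (simp add: algebra_simps)

text \<open>The difference quotients of \<open>f\<close> along \<open>[x, y]\<close> are bounded by \<open>f y - f x\<close> by convexity and
  converge to \<open>\<langle>\<nabla>f x, y - x\<rangle>\<close>.\<close>
lemma gradient_inequality:
  assumes x: "x \<in> edom \<Psi>" and y: "f y \<noteq> \<infinity>"
  shows "real_of_ereal (f x) + gf x \<bullet> (y - x) \<le> real_of_ereal (f y)"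
proof -
  have fy: "\<bar>f y\<bar> \<noteq> \<infinity>" using y closed_proper_convex_not_MInfty[OF f_cpc, of y] by auto
  define \<phi> where "\<phi> t = real_of_ereal (f (x + t *\<^sub>R (y - x)))" for t
  have "((\<lambda>t. x + t *\<^sub>R (y - x)) has_derivative (\<lambda>t. t *\<^sub>R (y - x))) (at 0)"
    by (auto intro!: derivative_eq_intros)
  hence "(\<phi> has_derivative (\<lambda>t. gf x \<bullet> (t *\<^sub>R (y - x)))) (at 0)"
    unfolding \<phi>_def using f_has_derivative[OF x]
    by (intro has_derivative_compose[of "\<lambda>t. x + t *\<^sub>R (y - x)", where g = "\<lambda>z. real_of_ereal (f z)", simplified]) auto
  hence "(\<phi> has_real_derivative gf x \<bullet> (y - x)) (at 0)"
    unfolding has_field_derivative_def by (simp add: mult.commute[of _ "gf x \<bullet> (y - x)"])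
  hence "((\<lambda>t. (\<phi> t - \<phi> 0) / (t - 0)) \<longlongrightarrow> gf x \<bullet> (y - x)) (at 0)"
    by (simp add: has_field_derivative_iff)
  hence "((\<lambda>t. (\<phi> t - \<phi> 0) / (t - 0)) \<longlongrightarrow> gf x \<bullet> (y - x)) (at_right 0)"
    by (rule filterlim_mono) (simp_all add: at_le)
  moreover have "eventually (\<lambda>t. (\<phi> t - \<phi> 0) / (t - 0) \<le> \<phi> 1 - \<phi> 0) (at_right 0)"
    unfolding eventually_at_right_field
  proof (intro exI[of _ 1] conjI allI impI)
    fix t :: real assume t: "0 < t" "t < 1"
    have "x + t *\<^sub>R (y - x) = (1 - t) *\<^sub>R x + t *\<^sub>R y" by (simp add: algebra_simps)
    hence "\<phi> t \<le> (1 - t) * \<phi> 0 + t * \<phi> 1"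
      using closed_proper_convex_combination(2)[OF f_cpc f_finite[OF x] fy, of t] t unfolding \<phi>_def by simp
    hence "\<phi> t - \<phi> 0 \<le> t * (\<phi> 1 - \<phi> 0)" by (simp add: algebra_simps)
    thus "(\<phi> t - \<phi> 0) / (t - 0) \<le> \<phi> 1 - \<phi> 0" using t by (simp add: divide_le_eq mult.commute)
  qed simp
  ultimately have "gf x \<bullet> (y - x) \<le> \<phi> 1 - \<phi> 0" by (rule tendsto_upperbound) simp
  thus ?thesis unfolding \<phi>_def by simp
qed

lemma conj_fun_f_at_gradient:
  assumes x: "x \<in> edom \<Psi>"
  shows "conj_fun f (gf x) = ereal (gf x \<bullet> x - real_of_ereal (f x))"
proof (rule antisym)
  show "conj_fun f (gf x) \<le> ereal (gf x \<bullet> x - real_of_ereal (f x))"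
    unfolding conj_fun_def
  proof (rule SUP_least)
    fix y
    show "ereal (gf x \<bullet> y) - f y \<le> ereal (gf x \<bullet> x - real_of_ereal (f x))"
    proof (cases "f y")
      case (real fy)
      thus ?thesis using gradient_inequality[OF x, of y] by (simp add: inner_diff_right)
    next
      case MInf
      thus ?thesis using closed_proper_convex_not_MInfty[OF f_cpc] by simp
    qed simp
  qed
  show "ereal (gf x \<bullet> x - real_of_ereal (f x)) \<le> conj_fun f (gf x)"
    unfolding conj_fun_def
    by (rule SUP_upper2[where i = x]) (use f_finite[OF x] in \<open>cases "f x"; simp\<close>)+
qed

lemma lin_argmin_in_edom:
  assumes "is_lin_argmin \<Psi> g s"
  shows "s \<in> edom \<Psi>"
proof -
  obtain z where z: "\<Psi> z < \<infinity>" using \<Psi>_cpc unfolding closed_proper_convex_def proper_fun_def by auto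
  have "ereal (g \<bullet> s) + \<Psi> s \<le> ereal (g \<bullet> z) + \<Psi> z" using assms unfolding is_lin_argmin_def by auto
  also have "\<dots> < \<infinity>" using z by simp
  finally show ?thesis unfolding edom_def by auto
qed

lemma conj_fun_\<Psi>_at_lin_argmin:
  assumes s: "is_lin_argmin \<Psi> g s"
  shows "conj_fun \<Psi> (- g) = ereal (- (g \<bullet> s) - real_of_ereal (\<Psi> s))"
proof -
  obtain \<psi> where \<Psi>s: "\<Psi> s = ereal \<psi>" using edom_\<Psi>_values[OF lin_argmin_in_edom[OF s]] .
  have "conj_fun \<Psi> (- g) \<le> ereal (- (g \<bullet> s) - \<psi>)"
    unfolding conj_fun_def
  proof (rule SUP_least)
    fix y
    show "ereal (- g \<bullet> y) - \<Psi> y \<le> ereal (- (g \<bullet> s) - \<psi>)"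
    proof (cases "\<Psi> y")
      case (real \<psi>')
      have "ereal (g \<bullet> s) + \<Psi> s \<le> ereal (g \<bullet> y) + \<Psi> y" using s unfolding is_lin_argmin_def by auto
      thus ?thesis using real \<Psi>s by simp
    next
      case MInf
      thus ?thesis using closed_proper_convex_not_MInfty[OF \<Psi>_cpc] by simp
    qed simp
  qed
  moreover have "ereal (- (g \<bullet> s) - \<psi>) \<le> conj_fun \<Psi> (- g)"
    unfolding conj_fun_def by (rule SUP_upper2[where i = s]) (simp_all add: \<Psi>s)
  ultimately show ?thesis using \<Psi>s by simp
qed

lemma gap_eq_fw_gap:
  assumes x: "x \<in> edom \<Psi>" and s: "is_lin_argmin \<Psi> (gf x) s"
  shows "gap f \<Psi> x (gf x) = ereal (fw_gap x s)"
proof -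
  obtain a b where "f x = ereal a" "\<Psi> x = ereal b" using edom_\<Psi>_values[OF x] .
  thus ?thesis
    unfolding gap_def fw_gap_def conj_fun_f_at_gradient[OF x] conj_fun_\<Psi>_at_lin_argmin[OF s]
    by (simp add: inner_diff_right)
qed

lemma lin_argmin_in_subdiff_conj:
  assumes s: "is_lin_argmin \<Psi> g s"
  shows "s \<in> subdiff (conj_fun \<Psi>) (- g)"
proof -
  obtain \<psi> where \<Psi>s: "\<Psi> s = ereal \<psi>" using edom_\<Psi>_values[OF lin_argmin_in_edom[OF s]] .
  have "conj_fun \<Psi> (- g) + ereal (s \<bullet> (v - - g)) = ereal (v \<bullet> s) - \<Psi> s" for v
    unfolding conj_fun_\<Psi>_at_lin_argmin[OF s] using \<Psi>s by (simp add: inner_add_right inner_commute)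
  moreover have "ereal (v \<bullet> s) - \<Psi> s \<le> conj_fun \<Psi> v" for v
    unfolding conj_fun_def by (rule SUP_upper) simp
  ultimately show ?thesis unfolding subdiff_def conj_fun_\<Psi>_at_lin_argmin[OF s] by simp
qed

lemma minimizer_in_edom:
  assumes xs: "\<forall>y. f xs + \<Psi> xs \<le> f y + \<Psi> y"
  shows "xs \<in> edom \<Psi>"
proof -
  obtain y where y: "y \<in> edom \<Psi>"
    using \<Psi>_cpc unfolding closed_proper_convex_def proper_fun_def edom_def by auto
  have "f xs + \<Psi> xs \<le> f y + \<Psi> y" using xs by simp
  also have "\<dots> < \<infinity>" using f_finite[OF y] \<Psi>_finite[OF y] by auto
  finally show ?thesis
    using closed_proper_convex_not_MInfty[OF f_cpc, of xs] unfolding edom_def by auto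
qed

lemma subopt_eq_obj_diff:
  assumes xs: "\<forall>y. f xs + \<Psi> xs \<le> f y + \<Psi> y" and y: "y \<in> edom \<Psi>"
  shows "subopt f \<Psi> y = obj y - obj xs"
proof -
  have "(INF z. f z + \<Psi> z) = f xs + \<Psi> xs"
    by (rule antisym) (auto intro: INF_lower INF_greatest xs[rule_format])
  moreover obtain a b where "f y = ereal a" "\<Psi> y = ereal b" using edom_\<Psi>_values[OF y] .
  moreover obtain a' b' where "f xs = ereal a'" "\<Psi> xs = ereal b'"
    using edom_\<Psi>_values[OF minimizer_in_edom[OF xs]] .
  ultimately show ?thesis unfolding subopt_def obj_def by simp
qed

lemma subopt_nonneg:
  assumes xs: "\<forall>y. f xs + \<Psi> xs \<le> f y + \<Psi> y" and y: "y \<in> edom \<Psi>"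
  shows "0 \<le> subopt f \<Psi> y"
proof -
  obtain a b where "f y = ereal a" "\<Psi> y = ereal b" using edom_\<Psi>_values[OF y] .
  moreover obtain a' b' where "f xs = ereal a'" "\<Psi> xs = ereal b'"
    using edom_\<Psi>_values[OF minimizer_in_edom[OF xs]] .
  ultimately show ?thesis
    using xs[rule_format, of y] unfolding subopt_eq_obj_diff[OF xs y] obj_def by simp
qed

lemma subopt_le_fw_gap:
  assumes xs: "\<forall>y. f xs + \<Psi> xs \<le> f y + \<Psi> y" and x: "x \<in> edom \<Psi>"
    and s: "is_lin_argmin \<Psi> (gf x) s"
  shows "subopt f \<Psi> x \<le> fw_gap x s"
proof -
  have xs_dom: "xs \<in> edom \<Psi>" by (rule minimizer_in_edom[OF xs])
  have "real_of_ereal (f x) + gf x \<bullet> (xs - x) \<le> real_of_ereal (f xs)"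
    by (rule gradient_inequality[OF x]) (use f_finite[OF xs_dom] in auto)
  moreover have "gf x \<bullet> s + real_of_ereal (\<Psi> s) \<le> gf x \<bullet> xs + real_of_ereal (\<Psi> xs)"
  proof -
    obtain a b where "\<Psi> s = ereal a" "\<Psi> xs = ereal b"
      using \<Psi>_finite[OF lin_argmin_in_edom[OF s]] \<Psi>_finite[OF xs_dom]
      by (cases "\<Psi> s"; cases "\<Psi> xs") auto
    thus ?thesis using s[unfolded is_lin_argmin_def, rule_format, of xs] by simp
  qed
  ultimately show ?thesis
    unfolding subopt_eq_obj_diff[OF xs x] obj_def fw_gap_def by (simp add: inner_diff_right)
qed

lemma Dcal_eq_obj:
  assumes x: "x \<in> edom \<Psi>" and s: "s \<in> edom \<Psi>" and t: "0 \<le> t" "t \<le> 1"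
  shows "Dcal f \<Psi> gf x s t = ereal (obj (x + t *\<^sub>R (s - x)) - obj x + t * fw_gap x s)"
proof -
  have z: "x + t *\<^sub>R (s - x) \<in> edom \<Psi>"
    using edom_\<Psi>_convex_combination[OF x s t] by (simp add: algebra_simps)
  obtain a b where "f (x + t *\<^sub>R (s - x)) = ereal a" "\<Psi> (x + t *\<^sub>R (s - x)) = ereal b"
    using edom_\<Psi>_values[OF z] .
  moreover obtain a' b' where "f x = ereal a'" "\<Psi> x = ereal b'" using edom_\<Psi>_values[OF x] .
  moreover obtain b'' where "\<Psi> s = ereal b''" using \<Psi>_finite[OF s] by (cases "\<Psi> s") auto
  ultimately show ?thesis
    unfolding Dcal_def bregman_def obj_def fw_gap_def by (simp add: inner_diff_right algebra_simps)
qed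

lemma theta_hat_test_iff_descent_step:
  assumes x: "x \<in> edom \<Psi>" and s: "is_lin_argmin \<Psi> (gf x) s"
  shows "(t \<in> {0..1} \<and> ereal (1 - t) * gap f \<Psi> x (gf x) + Dcal f \<Psi> gf x s t
            \<le> ereal (1 - c * t) * gap f \<Psi> x (gf x))
         \<longleftrightarrow> t \<in> descent_steps c x s"
proof (cases "t \<in> {0..1}")
  case True
  thus ?thesis
    using Dcal_eq_obj[OF x lin_argmin_in_edom[OF s], of t]
    unfolding gap_eq_fw_gap[OF x s] descent_steps_def by (simp add: algebra_simps)
qed (auto simp: descent_steps_def)

lemma f_continuous_on_segment:
  assumes x: "x \<in> edom \<Psi>" and s: "s \<in> edom \<Psi>"
  shows "continuous_on {0..1} (\<lambda>t. real_of_ereal (f (x + t *\<^sub>R (s - x))))"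
proof (rule continuous_at_imp_continuous_on, rule ballI)
  fix t :: real assume "t \<in> {0..1}"
  hence "x + t *\<^sub>R (s - x) \<in> edom \<Psi>"
    using edom_\<Psi>_convex_combination[OF x s, of t] by (simp add: algebra_simps)
  hence "isCont (\<lambda>y. real_of_ereal (f y)) (x + t *\<^sub>R (s - x))"
    by (rule has_derivative_continuous[OF f_has_derivative])
  moreover have "isCont (\<lambda>t. x + t *\<^sub>R (s - x)) t" by (intro continuous_intros)
  ultimately show "isCont (\<lambda>t. real_of_ereal (f (x + t *\<^sub>R (s - x)))) t"
    by (rule isCont_o2[rotated])
qed

text \<open>The descent test \<open>obj z \<le> b\<close> is \<open>(z, b - f z) \<in> epi \<Psi>\<close>, and the epigraph of \<open>\<Psi>\<close> is closed.\<close>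
lemma closed_descent_steps:
  assumes x: "x \<in> edom \<Psi>" and s: "s \<in> edom \<Psi>"
  shows "closed (descent_steps c x s)"
proof -
  define z where "z t = x + t *\<^sub>R (s - x)" for t
  define h where "h t = (z t, obj x - c * t * fw_gap x s - real_of_ereal (f (z t)))" for t
  have "t \<in> descent_steps c x s \<longleftrightarrow> t \<in> {0..1} \<inter> h -` eepi \<Psi>" for t
  proof (cases "t \<in> {0..1}")
    case True
    hence "z t \<in> edom \<Psi>"
      unfolding z_def using edom_\<Psi>_convex_combination[OF x s, of t] by (simp add: algebra_simps)
    then obtain a b where "f (z t) = ereal a" "\<Psi> (z t) = ereal b" by (rule edom_\<Psi>_values)
    thus ?thesis using True unfolding descent_steps_def h_def eepi_def obj_def z_def by auto
  qed (auto simp: descent_steps_def)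
  hence "descent_steps c x s = {0..1} \<inter> h -` eepi \<Psi>" by blast
  moreover have "continuous_on {0..1} h"
    unfolding h_def z_def by (intro continuous_intros f_continuous_on_segment[OF x s])
  moreover have "closed (eepi \<Psi>)" using \<Psi>_cpc by (simp add: closed_proper_convex_def)
  ultimately show ?thesis by (simp add: continuous_closed_preimage)
qed

lemma descent_steps_downward_closed:
  assumes x: "x \<in> edom \<Psi>" and s: "s \<in> edom \<Psi>"
    and th: "th \<in> descent_steps c x s" and t: "0 \<le> t" "t \<le> th"
  shows "t \<in> descent_steps c x s"
proof (cases "th = 0")
  case False
  define l where "l = t / th"
  have th01: "0 < th" "th \<le> 1" using th False unfolding descent_steps_def by auto
  have l: "0 \<le> l" "l \<le> 1" "l * th = t" using t th01 unfolding l_def by auto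
  have zth: "x + th *\<^sub>R (s - x) \<in> edom \<Psi>"
    using edom_\<Psi>_convex_combination[OF x s, of th] th01 by (simp add: algebra_simps)
  have "(1 - l) *\<^sub>R x + l *\<^sub>R (x + th *\<^sub>R (s - x)) = x + (l * th) *\<^sub>R (s - x)"
    by (simp add: algebra_simps)
  hence "x + t *\<^sub>R (s - x) = (1 - l) *\<^sub>R x + l *\<^sub>R (x + th *\<^sub>R (s - x))" by (simp add: l(3))
  hence "obj (x + t *\<^sub>R (s - x)) \<le> (1 - l) * obj x + l * obj (x + th *\<^sub>R (s - x))"
    using obj_convex[OF x zth l(1,2)] by simp
  also have "\<dots> \<le> (1 - l) * obj x + l * (obj x - c * th * fw_gap x s)"
    using th l unfolding descent_steps_def by (intro add_left_mono mult_left_mono) auto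
  also have "\<dots> = obj x - c * (l * th) * fw_gap x s" by (simp add: algebra_simps)
  finally show ?thesis unfolding descent_steps_def using l th01 t by auto
qed (use th t in simp)

lemma theta_hat_is_greatest_descent_step:
  assumes x: "x \<in> edom \<Psi>" and s: "is_lin_argmin \<Psi> (gf x) s"
  shows "theta_hat f \<Psi> gf c x s \<in> descent_steps c x s"
    and "\<And>t. t \<in> descent_steps c x s \<Longrightarrow> t \<le> theta_hat f \<Psi> gf c x s"
proof -
  have "compact (descent_steps c x s)"
    using closed_descent_steps[OF x lin_argmin_in_edom[OF s]]
    by (auto simp: compact_eq_bounded_closed descent_steps_def intro: bounded_subset[of "{0..1}"])
  moreover have "0 \<in> descent_steps c x s" unfolding descent_steps_def by simp
  ultimately obtain th where th: "th \<in> descent_steps c x s" "\<forall>t \<in> descent_steps c x s. t \<le> th"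
    using compact_attains_sup by blast
  have "theta_hat f \<Psi> gf c x s = th"
    unfolding theta_hat_def theta_hat_test_iff_descent_step[OF x s] using th by (intro Greatest_equality) auto
  thus "theta_hat f \<Psi> gf c x s \<in> descent_steps c x s"
    and "\<And>t. t \<in> descent_steps c x s \<Longrightarrow> t \<le> theta_hat f \<Psi> gf c x s"
    using th by auto
qed

text \<open>For this step \<open>m\<close> we have \<open>M * m powr (q - 1) \<le> q * (1 - c) * subopt powr (1 - r)\<close>, so weak
  growth gives \<open>Dcal \<le> (1 - c) * m * gap\<close>, which is exactly the descent test.\<close>
lemma weak_growth_step_is_descent_step:
  assumes x: "x \<in> edom \<Psi>" and s: "is_lin_argmin \<Psi> (gf x) s"
    and xs: "\<forall>y. f xs + \<Psi> xs \<le> f y + \<Psi> y"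
    and c: "c < 1" and q: "1 < q" and growth: "weak_growth f \<Psi> gf q r M"
  shows "min 1 ((q * (1 - c) / M * rpow (subopt f \<Psi> x) (1 - r)) powr (1 / (q - 1)))
           \<in> descent_steps c x s"
proof -
  define \<sigma> where "\<sigma> = rpow (subopt f \<Psi> x) (1 - r)"
  define T where "T = q * (1 - c) / M * \<sigma>"
  define m where "m = min 1 (T powr (1 / (q - 1)))"
  have M: "0 < M" using growth by (simp add: weak_growth_def)
  have \<sigma>: "0 \<le> \<sigma>" unfolding \<sigma>_def rpow_def by simp
  have m: "0 \<le> m" "m \<le> 1" "m \<le> T powr (1 / (q - 1))" unfolding m_def by auto
  have G: "0 \<le> fw_gap x s"
    using subopt_nonneg[OF xs x] subopt_le_fw_gap[OF xs x s] by linarith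
  show ?thesis
  proof (cases "\<sigma> = 0 \<or> m = 0")
    case True
    hence "m = 0" unfolding m_def T_def by auto
    thus ?thesis unfolding m_def T_def \<sigma>_def descent_steps_def by simp
  next
    case False
    hence \<sigma>_pos: "0 < \<sigma>" and m_pos: "0 < m" using \<sigma> m by auto
    have T: "0 < T" unfolding T_def using \<sigma>_pos M c q by simp
    have "Dcal f \<Psi> gf x s m * ereal \<sigma> \<le> ereal (M * m powr q / q) * gap f \<Psi> x (gf x)"
      using growth x lin_argmin_in_subdiff_conj[OF s] m unfolding weak_growth_def \<sigma>_def by auto
    hence growth_bound: "(obj (x + m *\<^sub>R (s - x)) - obj x + m * fw_gap x s) * \<sigma>
        \<le> M * m powr q / q * fw_gap x s"
      unfolding Dcal_eq_obj[OF x lin_argmin_in_edom[OF s] m(1,2)] gap_eq_fw_gap[OF x s] by simp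
    have "m powr (q - 1) \<le> (T powr (1 / (q - 1))) powr (q - 1)"
      using m q by (intro powr_mono2) auto
    also have "\<dots> = T" using T q by (simp add: powr_powr)
    finally have mT: "m powr (q - 1) \<le> T" .
    have "M * m powr q / q * fw_gap x s = M / q * fw_gap x s * m * m powr (q - 1)"
      using powr_add[of m 1 "q - 1"] m_pos by (simp add: algebra_simps)
    also have "\<dots> \<le> M / q * fw_gap x s * m * T"
      using mT M q G m_pos by (intro mult_left_mono) auto
    also have "\<dots> = (1 - c) * m * fw_gap x s * \<sigma>" unfolding T_def using M q by (simp add: field_simps)
    finally have "(obj (x + m *\<^sub>R (s - x)) - obj x + m * fw_gap x s) * \<sigma>
        \<le> ((1 - c) * m * fw_gap x s) * \<sigma>"
      using growth_bound by linarith
    hence "obj (x + m *\<^sub>R (s - x)) - obj x + m * fw_gap x s \<le> (1 - c) * m * fw_gap x s"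
      using \<sigma>_pos by simp
    thus ?thesis using m unfolding descent_steps_def m_def T_def \<sigma>_def by (simp add: algebra_simps)
  qed
qed

text \<open>The step \<open>\<theta>\<close> passes the descent test, \<open>\<theta> \<ge> \<rho> * theta_hat \<ge> \<rho> * m\<close>, the gap dominates
  the suboptimality, and \<open>c * \<rho> \<ge> c + \<rho> - 1\<close>.\<close>
lemma subopt_conditional_gradient_step:
  assumes x: "x \<in> edom \<Psi>" and s: "is_lin_argmin \<Psi> (gf x) s"
    and xs: "\<forall>y. f xs + \<Psi> xs \<le> f y + \<Psi> y"
    and c: "0 < c" "c < 1" and \<rho>: "0 < \<rho>" "\<rho> < 1" and \<theta>: "0 \<le> \<theta>"
    and \<theta>_lower: "\<rho> * theta_hat f \<Psi> gf c x s \<le> \<theta>" and \<theta>_upper: "\<theta> \<le> theta_hat f \<Psi> gf c x s"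
    and q: "1 < q" and growth: "weak_growth f \<Psi> gf q r M"
  shows "subopt f \<Psi> ((1 - \<theta>) *\<^sub>R x + \<theta> *\<^sub>R s) \<le> subopt f \<Psi> x *
    (1 - (c + \<rho> - 1) * min 1 ((q * (1 - c) / M * rpow (subopt f \<Psi> x) (1 - r)) powr (1 / (q - 1))))"
proof -
  define a where "a = subopt f \<Psi> x"
  define m where "m = min 1 ((q * (1 - c) / M * rpow a (1 - r)) powr (1 / (q - 1)))"
  define th where "th = theta_hat f \<Psi> gf c x s"
  have sd: "s \<in> edom \<Psi>" by (rule lin_argmin_in_edom[OF s])
  have a: "0 \<le> a" "a \<le> fw_gap x s"
    unfolding a_def using subopt_nonneg[OF xs x] subopt_le_fw_gap[OF xs x s] by auto
  have m: "0 \<le> m" "m \<le> 1" unfolding m_def by auto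
  have m_th: "m \<le> th"
    unfolding m_def a_def th_def using c q
    by (intro theta_hat_is_greatest_descent_step(2)[OF x s]
        weak_growth_step_is_descent_step[OF x s xs _ q growth]) auto
  have "\<theta> \<in> descent_steps c x s"
    using descent_steps_downward_closed[OF x sd theta_hat_is_greatest_descent_step(1)[OF x s] \<theta> \<theta>_upper] .
  hence \<theta>_descent: "obj (x + \<theta> *\<^sub>R (s - x)) \<le> obj x - c * \<theta> * fw_gap x s" and \<theta>1: "\<theta> \<le> 1"
    unfolding descent_steps_def by auto
  have new: "(1 - \<theta>) *\<^sub>R x + \<theta> *\<^sub>R s = x + \<theta> *\<^sub>R (s - x)" by (simp add: algebra_simps)
  have "subopt f \<Psi> (x + \<theta> *\<^sub>R (s - x)) = obj (x + \<theta> *\<^sub>R (s - x)) - obj xs"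
    using edom_\<Psi>_convex_combination[OF x sd \<theta> \<theta>1] by (intro subopt_eq_obj_diff[OF xs]) (simp add: new)
  also have "\<dots> \<le> a - c * \<theta> * fw_gap x s"
    using \<theta>_descent subopt_eq_obj_diff[OF xs x] unfolding a_def by simp
  also have "\<dots> \<le> a - c * \<theta> * a" using a c \<theta> by (simp add: mult_left_mono)
  also have "\<dots> \<le> a - c * (\<rho> * m) * a"
  proof -
    have "\<rho> * m \<le> \<theta>" using mult_left_mono[OF m_th, of \<rho>] \<rho> \<theta>_lower unfolding th_def by linarith
    thus ?thesis using a c by (simp add: mult_left_mono mult_right_mono)
  qed
  also have "\<dots> \<le> a * (1 - (c + \<rho> - 1) * m)"
  proof -
    have "c + \<rho> - 1 \<le> c * \<rho>" using mult_left_mono[of \<rho> 1 "1 - c"] c \<rho> by (simp add: algebra_simps)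
    hence "(c + \<rho> - 1) * m * a \<le> c * \<rho> * m * a" using m a by (intro mult_right_mono) auto
    thus ?thesis by (simp add: algebra_simps)
  qed
  finally show ?thesis unfolding new a_def m_def .
qed

end

theorem theorem4:
  fixes f \<Psi> :: "'a::euclidean_space \<Rightarrow> ereal"
    and gf :: "'a \<Rightarrow> 'a"
    and x s :: "nat \<Rightarrow> 'a"
    and \<theta> :: "nat \<Rightarrow> real"
    and c \<rho> q r M :: real
  assumes f_cpc: "closed_proper_convex f"
    and \<Psi>_cpc: "closed_proper_convex \<Psi>"
    and A1: "\<forall>y \<in> edom \<Psi>. has_grad f (gf y) y"
    and A2: "\<forall>y \<in> edom f. \<forall>g. has_grad f g y \<longrightarrow> (\<exists>z. is_lin_argmin \<Psi> g z)"
    and min_attained: "\<exists>xs. \<forall>y. f xs + \<Psi> xs \<le> f y + \<Psi> y"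
    and c: "0 < c" "c < 1" and \<rho>: "0 < \<rho>" "\<rho> < 1" and c\<rho>: "c + \<rho> > 1"
    and x0: "x 0 \<in> edom \<Psi>"
    and s_def: "\<forall>k. is_lin_argmin \<Psi> (gf (x k)) (s k)"
    and \<theta>_range: "\<forall>k. \<theta> k \<in> {0..1}"
    and \<theta>_step: "\<forall>k. \<rho> * theta_hat f \<Psi> gf c (x k) (s k) \<le> \<theta> k
                    \<and> \<theta> k \<le> theta_hat f \<Psi> gf c (x k) (s k)"
    and x_next: "\<forall>k. x (Suc k) = (1 - \<theta> k) *\<^sub>R x k + \<theta> k *\<^sub>R s k"
    and q: "q > 1" and r: "0 \<le> r" "r \<le> 1"
    and growth: "weak_growth f \<Psi> gf q r M"
  shows "(\<forall>k. subopt f \<Psi> (x (Suc k)) \<le> subopt f \<Psi> (x k) *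
            (1 - (c + \<rho> - 1) * min 1 ((q * (1 - c) / M * rpow (subopt f \<Psi> (x k)) (1 - r))
                                         powr (1 / (q - 1)))))
       \<and> (r = 1 \<longrightarrow> (\<forall>k. subopt f \<Psi> (x k) \<le> subopt f \<Psi> (x 0) *
            (1 - (c + \<rho> - 1) * min 1 ((q * (1 - c) / M) powr (1 / (q - 1)))) ^ k))
       \<and> (r < 1 \<longrightarrow>
            (\<exists>k. subopt f \<Psi> (x k) powr (1 - r) \<le> M / (q * (1 - c))) \<and>
            (let k0 = (LEAST k. subopt f \<Psi> (x k) powr (1 - r) \<le> M / (q * (1 - c))) in
              (\<forall>k \<le> k0. subopt f \<Psi> (x k) \<le> subopt f \<Psi> (x 0) * (1 - (c + \<rho> - 1)) ^ k) \<and>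
              (\<forall>k \<ge> k0. subopt f \<Psi> (x k) \<le>
                 (subopt f \<Psi> (x k0) powr ((r - 1) / (q - 1))
                  + (1 - r) * (c + \<rho> - 1) / (q - 1) * (q * (1 - c) / M) powr (1 / (q - 1))
                    * real (k - k0)) powr ((q - 1) / (r - 1)))))"
proof -
  interpret cond_grad_problem f \<Psi> gf using f_cpc \<Psi>_cpc A1 by unfold_locales
  obtain xs where xs: "\<forall>y. f xs + \<Psi> xs \<le> f y + \<Psi> y" using min_attained by blast
  have K: "0 < q * (1 - c) / M" using growth q c by (simp add: weak_growth_def)
  have x_dom: "x k \<in> edom \<Psi>" for k
  proof (induction k)
    case (Suc k)
    thus ?case
      using edom_\<Psi>_convex_combination[OF Suc lin_argmin_in_edom[OF s_def[rule_format]]] \<theta>_range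
      unfolding x_next[rule_format] by auto
  qed (rule x0)
  define a where "a k = subopt f \<Psi> (x k)" for k
  have a_nonneg: "0 \<le> a k" for k unfolding a_def by (rule subopt_nonneg[OF xs x_dom])
  have contraction: "a (Suc k) \<le> a k * (1 - (c + \<rho> - 1)
      * min 1 ((q * (1 - c) / M * rpow (a k) (1 - r)) powr (1 / (q - 1))))" for k
    unfolding a_def x_next[rule_format] using \<theta>_range \<theta>_step
    by (intro subopt_conditional_gradient_step[OF x_dom s_def[rule_format] xs c \<rho> _ _ _ q growth]) auto
  have linear_rate: "a k \<le> a 0 * (1 - (c + \<rho> - 1) * min 1 ((q * (1 - c) / M) powr (1 / (q - 1)))) ^ k"
    if "r = 1" for k
    by (rule geometric_decay_upto[of k]) (use contraction that c \<rho> in \<open>auto simp: rpow_def intro!: mult_le_one\<close>)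
  have sublinear_rate: "(\<exists>k. a k powr (1 - r) \<le> 1 / (q * (1 - c) / M)) \<and>
    (let k0 = (LEAST k. a k powr (1 - r) \<le> 1 / (q * (1 - c) / M)) in
      (\<forall>k \<le> k0. a k \<le> a 0 * (1 - (c + \<rho> - 1)) ^ k) \<and>
      (\<forall>k \<ge> k0. a k \<le> (a k0 powr ((r - 1) / (q - 1))
          + (1 - r) * (c + \<rho> - 1) / (q - 1) * (q * (1 - c) / M) powr (1 / (q - 1)) * real (k - k0))
          powr ((q - 1) / (r - 1))))"
    if "r < 1"
    by (rule recursion_rate_sublinear[OF a_nonneg _ _ K r(1) that q])
      (use contraction that c \<rho> c\<rho> in \<open>auto simp: rpow_def\<close>)
  show ?thesis
    using contraction linear_rate sublinear_rate unfolding a_def by simp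
qed

end
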